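(* Let $r\ge2$, let $s_1,\dots,s_r,n$ be independent indeterminates over $\mathbb{Q}$, and let $R_1=n\,S_r(r\varphi(t)-t\varphi'(t))-S_r(\varphi(t))\,\mathrm{diag}(r-1,r-2,\ldots,1,0)$. Then \[ R_1^{-1}=\frac1n\,Q\left(\frac{r-1}{r},\frac{r-2}{r},\ldots,\frac1r,\frac0r\right)\mathrm{diag}(\zeta_1,\ldots,\zeta_r)\,P\left(-\frac{2r-1}{r},-\frac{2r-2}{r},\ldots,-\frac{r+1}{r},-\frac rr\right), \] where $\zeta_i=\frac{n}{rn-(r-i)}$ for $1\le i\le r$.
   Context: $\varphi(t)=1+s_1t+\cdots+s_rt^r$. For $\lambda\in\mathbb{C}$ and $\ell\in\mathbb{Z}$, $\beta_\ell(\lambda)$ is the coefficient of $t^\ell$ in $\varphi(t)^\lambda$ (so $\beta_0=1$, $\beta_\ell=0$ for $\ell<0$). For $\lambda_1,\dots,\lambda_m$, $P(\lambda_1,\ldots,\lambda_m)$ is the $m\times m$ matrix with $(i,j)$ entry $\beta_{i-j}(\lambda_i)$; $Q(\mu_1,\ldots,\mu_m)$ is the $m\times m$ matrix with $(i,j)$ entry $\beta_{i-j}(\mu_j)$. For a power series $\psi(t)=a_0+a_1t+\cdots$, $S_m(\psi(t))$ is the $m\times m$ matrix with $(i,j)$ entry $a_{i-j}$ ($a_i=0$ for $i<0$). *)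

theory Defs
  imports "HOL-Computational_Algebra.Formal_Power_Series" "Jordan_Normal_Form.Matrix"
begin

text \<open>phi(t) = 1 + s_1 t + ... + s_r t^r (s is indexed from 1; s 0 is ignored).\<close>
definition phi :: "(nat \<Rightarrow> 'a::comm_ring_1) \<Rightarrow> nat \<Rightarrow> 'a fps" where
  "phi s r = Abs_fps (\<lambda>k. if k = 0 then 1 else if k \<le> r then s k else 0)"

text \<open>phi(t)^lambda, defined as the binomial series (1+X)^lambda composed with phi - 1
  (phi - 1 has zero constant term).\<close>
definition phi_pow :: "(nat \<Rightarrow> 'a::field_char_0) \<Rightarrow> nat \<Rightarrow> 'a \<Rightarrow> 'a fps" where
  "phi_pow s r lam = fps_compose (fps_binomial lam) (phi s r - 1)"

text \<open>beta_l(lambda): coefficient of t^l in phi(t)^lambda (l a natural number; negative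
  indices are handled as 0 in the matrices below).\<close>
definition beta :: "(nat \<Rightarrow> 'a::field_char_0) \<Rightarrow> nat \<Rightarrow> nat \<Rightarrow> 'a \<Rightarrow> 'a" where
  "beta s r l lam = fps_nth (phi_pow s r lam) l"

text \<open>Matrices are 0-indexed: entry (i,j) here is entry (i+1,j+1) of the paper.\<close>
definition P_mat :: "(nat \<Rightarrow> 'a::field_char_0) \<Rightarrow> nat \<Rightarrow> (nat \<Rightarrow> 'a) \<Rightarrow> nat \<Rightarrow> 'a mat" where
  "P_mat s r lam m = mat m m (\<lambda>(i,j). if j \<le> i then beta s r (i - j) (lam i) else 0)"

definition Q_mat :: "(nat \<Rightarrow> 'a::field_char_0) \<Rightarrow> nat \<Rightarrow> (nat \<Rightarrow> 'a) \<Rightarrow> nat \<Rightarrow> 'a mat" where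
  "Q_mat s r mu m = mat m m (\<lambda>(i,j). if j \<le> i then beta s r (i - j) (mu j) else 0)"

definition S_mat :: "nat \<Rightarrow> 'a::comm_ring_1 fps \<Rightarrow> 'a mat" where
  "S_mat m psi = mat m m (\<lambda>(i,j). if j \<le> i then fps_nth psi (i - j) else 0)"

definition diag_m :: "nat \<Rightarrow> (nat \<Rightarrow> 'a::zero) \<Rightarrow> 'a mat" where
  "diag_m m f = mat m m (\<lambda>(i,j). if i = j then f i else 0)"

end

theory Submission
  imports Defs "Jordan_Normal_Form.Determinant"
begin

text \<open>Write \<open>\<theta> = t d/dt\<close>. Column \<open>j\<close> of \<open>Q\<close> is the coefficient vector of \<open>t^j \<phi>^\<mu>\<close>,
  \<open>\<mu> = (r-1-j)/r\<close>; the Toeplitz matrix \<open>S_r(\<psi>)\<close> acts on coefficient vectors as multiplication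
  by \<open>\<psi>\<close>, \<open>diag(r-1,...,0)\<close> acts as \<open>r - 1 - \<theta>\<close>, and row \<open>i\<close> of \<open>P\<close> takes the coefficient
  of \<open>t^i\<close> after multiplication by \<open>\<phi>^\<lambda>\<close>, \<open>\<lambda> = -1 - (r-1-i)/r\<close>. Hence \<open>P R1 Q\<close> is lower
  triangular, and for \<open>i \<ge> j\<close> its entry \<open>(i,j)\<close> is the coefficient of \<open>t^k\<close>, \<open>k = i - j\<close>, in
  \<open>c_j \<phi>^e + (\<mu> - n) \<phi>^(e-1) \<theta>\<phi>\<close>, where \<open>e = k/r\<close> and \<open>c_j = rn - (r-1-j)\<close>.
  For \<open>k > 0\<close>, Euler's identity \<open>\<theta>(\<phi>^e) = e \<phi>^(e-1) \<theta>\<phi>\<close> read at \<open>t^k\<close> turns this into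
  \<open>(c_j + r(\<mu> - n))\<close> times a coefficient of \<open>\<phi>^e\<close>, and \<open>c_j + r(\<mu> - n) = 0\<close>.
  So \<open>P R1 Q = diag(c_j)\<close>, and since \<open>c_j \<zeta>_j = n\<close> this yields \<open>R1 M = 1\<close>.\<close>

no_notation vec_index (infixl \<open>$\<close> 100)
notation fps_nth (infixl \<open>$\<close> 75)

lemma fps_X_mult_deriv_nth: "(fps_X * fps_deriv f) $ k = of_nat k * f $ k"
  by (cases k) simp_all

lemma fps_X_mult_deriv_X_power_mult:
  "fps_X * fps_deriv (fps_X ^ j * f)
     = fps_const (of_nat j) * (fps_X ^ j * f) + fps_X ^ j * (fps_X * fps_deriv f)"
proof (rule fps_ext)
  fix k
  show "(fps_X * fps_deriv (fps_X ^ j * f)) $ k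
      = (fps_const (of_nat j) * (fps_X ^ j * f) + fps_X ^ j * (fps_X * fps_deriv f)) $ k"
    unfolding fps_add_nth fps_mult_left_const_nth fps_X_mult_deriv_nth fps_X_power_mult_nth
    by (cases "k < j") (auto simp: not_less le_iff_add algebra_simps)
qed

lemma fps_binomial_ODE: "(1 + fps_X) * fps_deriv (fps_binomial c) = fps_const c * fps_binomial c"
proof -
  have unit: "(1 + fps_X :: 'a fps) $ 0 \<noteq> 0"
    by simp
  have "(1 + fps_X) * fps_deriv (fps_binomial c)
      = fps_const c * fps_binomial c * (inverse (1 + fps_X) * (1 + fps_X))"
    unfolding fps_binomial_deriv fps_divide_unit[OF unit] by (simp only: ac_simps)
  then show ?thesis
    by (simp only: inverse_mult_eq_1[OF unit] mult_1_right)
qed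

lemma phi_minus_1_nth_0: "(phi s r - 1) $ 0 = 0"
  by (simp add: phi_def)

lemma phi_pow_add: "phi_pow s r (a + b) = phi_pow s r a * phi_pow s r b"
  unfolding phi_pow_def
  by (simp add: fps_binomial_add_mult fps_compose_mult_distrib[OF phi_minus_1_nth_0])

lemma phi_pow_0: "phi_pow s r 0 = 1"
  by (simp add: phi_pow_def)

lemma phi_pow_1: "phi_pow s r 1 = phi s r"
  unfolding phi_pow_def
  by (simp add: fps_binomial_1 fps_compose_add_distrib fps_X_fps_compose_startby0[OF phi_minus_1_nth_0])

lemma phi_pow_nth_0: "phi_pow s r a $ 0 = 1"
  by (simp add: phi_pow_def)

lemma phi_mult_deriv_phi_pow:
  "phi s r * fps_deriv (phi_pow s r a) = fps_const a * phi_pow s r a * fps_deriv (phi s r)"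
proof -
  have "phi s r * (fps_deriv (fps_binomial a) oo (phi s r - 1))
      = ((1 + fps_X) * fps_deriv (fps_binomial a)) oo (phi s r - 1)"
    by (simp add: fps_compose_mult_distrib[OF phi_minus_1_nth_0] fps_compose_add_distrib
        fps_X_fps_compose_startby0[OF phi_minus_1_nth_0])
  also have "\<dots> = fps_const a * phi_pow s r a"
    by (simp add: fps_binomial_ODE phi_pow_def fps_compose_mult_distrib[OF phi_minus_1_nth_0])
  finally show ?thesis
    unfolding phi_pow_def by (simp add: fps_compose_deriv[OF phi_minus_1_nth_0] mult.assoc)
qed

lemma fps_deriv_phi_pow:
  "fps_deriv (phi_pow s r a) = fps_const a * phi_pow s r (a - 1) * fps_deriv (phi s r)"
proof -
  have inv: "phi_pow s r (-1) * phi s r = 1"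
    using phi_pow_add[of s r "-1" 1] by (simp add: phi_pow_0 phi_pow_1)
  have "fps_deriv (phi_pow s r a) = phi_pow s r (-1) * phi s r * fps_deriv (phi_pow s r a)"
    by (simp only: inv mult_1)
  also have "\<dots> = phi_pow s r (-1) * (fps_const a * phi_pow s r a * fps_deriv (phi s r))"
    by (simp only: mult.assoc phi_mult_deriv_phi_pow)
  also have "\<dots> = fps_const a * (phi_pow s r (-1) * phi_pow s r a) * fps_deriv (phi s r)"
    by (simp only: ac_simps)
  also have "phi_pow s r (-1) * phi_pow s r a = phi_pow s r (a - 1)"
    using phi_pow_add[of s r "-1" a] by simp
  finally show ?thesis .
qed

lemma phi_pow_Euler_nth:
  "of_nat k * phi_pow s r a $ k = a * (fps_X * phi_pow s r (a - 1) * fps_deriv (phi s r)) $ k"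
proof -
  have "of_nat k * phi_pow s r a $ k = (fps_X * fps_deriv (phi_pow s r a)) $ k"
    by (rule fps_X_mult_deriv_nth[symmetric])
  also have "fps_X * fps_deriv (phi_pow s r a)
      = fps_const a * (fps_X * phi_pow s r (a - 1) * fps_deriv (phi s r))"
    by (simp add: fps_deriv_phi_pow ac_simps)
  finally show ?thesis
    by simp
qed

lemma phi_pow_Euler_nth_of_ratio:
  fixes s :: "nat \<Rightarrow> 'a::field_char_0"
  assumes "0 < k" and "of_nat m * e = of_nat k"
  shows "(fps_X * phi_pow s r (e - 1) * fps_deriv (phi s r)) $ k = of_nat m * phi_pow s r e $ k"
proof -
  have "e \<noteq> 0"
    using assms by auto
  have "e * (fps_X * phi_pow s r (e - 1) * fps_deriv (phi s r)) $ k = of_nat k * phi_pow s r e $ k"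
    by (rule phi_pow_Euler_nth[symmetric])
  also have "\<dots> = e * (of_nat m * phi_pow s r e $ k)"
    unfolding assms(2)[symmetric] by (simp only: ac_simps)
  finally show ?thesis
    using \<open>e \<noteq> 0\<close> by simp
qed

lemma phi_pow_mult_R1_column:
  fixes s :: "nat \<Rightarrow> 'a::field_char_0" and r j :: nat and a b c d n :: 'a
  defines "H \<equiv> fps_X ^ j * phi_pow s r a"
  shows "phi_pow s r b * (fps_const n * ((fps_const d * phi s r - fps_X * fps_deriv (phi s r)) * H)
           - phi s r * (fps_const c * H - fps_X * fps_deriv H))
       = fps_X ^ j * (fps_const (n * d - c + of_nat j) * phi_pow s r (a + b + 1)
           + fps_const (a - n) * (fps_X * phi_pow s r (a + b) * fps_deriv (phi s r)))"
proof -
  define A B f where "A = phi_pow s r a" and "B = phi_pow s r b" and "f = phi s r"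
  have BA: "B * A = phi_pow s r (a + b)" and BAf: "B * A * f = phi_pow s r (a + b + 1)"
    by (simp_all add: A_def B_def f_def phi_pow_add phi_pow_1 ac_simps)
  have "f * (fps_X * fps_deriv H)
      = fps_const (of_nat j) * (f * H) + fps_X ^ j * fps_X * (f * fps_deriv A)"
    unfolding H_def A_def fps_X_mult_deriv_X_power_mult by (simp add: algebra_simps)
  also have "f * fps_deriv A = fps_const a * A * fps_deriv f"
    unfolding A_def f_def by (rule phi_mult_deriv_phi_pow)
  finally have "B * (fps_const n * ((fps_const d * f - fps_X * fps_deriv f) * H)
           - f * (fps_const c * H - fps_X * fps_deriv H))
      = fps_X ^ j * (fps_const (n * d - c + of_nat j) * (B * A * f)
           + fps_const (a - n) * (fps_X * (B * A) * fps_deriv f))"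
    unfolding H_def A_def[symmetric] by (simp add: algebra_simps flip: fps_const_mult fps_const_add fps_const_sub)
  then show ?thesis
    unfolding BAf unfolding BA unfolding f_def B_def .
qed

lemma phi_pow_mult_R1_column_nth:
  fixes s :: "nat \<Rightarrow> 'a::field_char_0" and n :: 'a
  assumes "i < r" "j < r"
  defines "H \<equiv> fps_X ^ j * phi_pow s r (of_nat (r - 1 - j) / of_nat r)"
  shows "(phi_pow s r (- (of_nat (2 * r - 1 - i) / of_nat r))
          * (fps_const n * ((fps_const (of_nat r) * phi s r - fps_X * fps_deriv (phi s r)) * H)
             - phi s r * (fps_const (of_nat (r - 1)) * H - fps_X * fps_deriv H))) $ i
       = (if i = j then of_nat r * n - of_nat (r - 1 - j) else 0)"
proof -
  define a b c where "a = (of_nat (r - 1 - j) / of_nat r :: 'a)"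
    and "b = - (of_nat (2 * r - 1 - i) / of_nat r :: 'a)"
    and "c = of_nat r * n - of_nat (r - 1 - j)"
  define F where "F = fps_const c * phi_pow s r (a + b + 1)
    + fps_const (a - n) * (fps_X * phi_pow s r (a + b) * fps_deriv (phi s r))"
  have r_nz: "(of_nat r :: 'a) \<noteq> 0"
    using assms by simp
  have "n * of_nat r - of_nat (r - 1) + of_nat j = c"
    using assms by (simp add: c_def algebra_simps)
  then have series: "phi_pow s r b
      * (fps_const n * ((fps_const (of_nat r) * phi s r - fps_X * fps_deriv (phi s r)) * H)
         - phi s r * (fps_const (of_nat (r - 1)) * H - fps_X * fps_deriv H)) = fps_X ^ j * F"
    unfolding F_def H_def a_def[symmetric] by (simp only: phi_pow_mult_R1_column)
  have F_pos: "F $ (i - j) = 0" if "j < i"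
  proof -
    define k where "k = i - j"
    have "0 < k" and "of_nat r * (a + b + 1) = of_nat k"
      using that assms r_nz by (simp_all add: k_def a_def b_def field_simps)
    then have Euler: "(fps_X * phi_pow s r (a + b) * fps_deriv (phi s r)) $ k
        = of_nat r * phi_pow s r (a + b + 1) $ k"
      using phi_pow_Euler_nth_of_ratio[of k r "a + b + 1" s] by simp
    have "F $ k = (c + (a - n) * of_nat r) * phi_pow s r (a + b + 1) $ k"
      unfolding F_def fps_add_nth fps_mult_left_const_nth Euler by (simp add: algebra_simps)
    also have "c + (a - n) * of_nat r = 0"
      using assms r_nz by (simp add: a_def c_def field_simps)
    finally show ?thesis
      by (simp add: k_def)
  qed
  have F_0: "F $ 0 = c"
    by (simp add: F_def phi_pow_nth_0)
  have "(fps_X ^ j * F) $ i = (if i = j then c else 0)"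
    unfolding fps_X_power_mult_nth using F_pos F_0 by (cases i j rule: linorder_cases) auto
  then show ?thesis
    unfolding b_def[symmetric] series c_def .
qed

definition coeffs_mat :: "nat \<Rightarrow> nat \<Rightarrow> (nat \<Rightarrow> 'a::comm_ring_1 fps) \<Rightarrow> 'a mat" where
  "coeffs_mat m c G = mat m c (\<lambda>(i, j). G j $ i)"

definition conv_mat :: "nat \<Rightarrow> (nat \<Rightarrow> 'a::comm_ring_1 fps) \<Rightarrow> 'a mat" where
  "conv_mat m F = mat m m (\<lambda>(i, j). if j \<le> i then F i $ (i - j) else 0)"

lemma coeffs_mat_carrier [simp]: "coeffs_mat m c G \<in> carrier_mat m c"
  and dim_row_coeffs_mat [simp]: "dim_row (coeffs_mat m c G) = m"
  and dim_col_coeffs_mat [simp]: "dim_col (coeffs_mat m c G) = c"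
  by (simp_all add: coeffs_mat_def)

lemma coeffs_mat_index [simp]: "i < m \<Longrightarrow> j < c \<Longrightarrow> coeffs_mat m c G $$ (i, j) = G j $ i"
  by (simp add: coeffs_mat_def)

lemma conv_mat_carrier [simp]: "conv_mat m F \<in> carrier_mat m m"
  by (simp add: conv_mat_def)

lemma fps_mult_nth_as_lower_sum:
  fixes f g :: "'a::comm_ring_1 fps"
  assumes "i < m"
  shows "(\<Sum>b\<in>{0..<m}. (if b \<le> i then f $ (i - b) else 0) * g $ b) = (f * g) $ i"
proof -
  have "(\<Sum>b\<in>{0..<m}. (if b \<le> i then f $ (i - b) else 0) * g $ b)
      = (\<Sum>b\<in>{0..i}. f $ (i - b) * g $ b)"
    using assms by (intro sum.mono_neutral_cong_right) auto
  also have "\<dots> = (g * f) $ i"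
    by (unfold fps_mult_nth) (simp add: ac_simps)
  finally show ?thesis
    by (simp add: mult.commute)
qed

lemma conv_mat_mult_coeffs_mat:
  "conv_mat m F * coeffs_mat m c G = mat m c (\<lambda>(i, j). (F i * G j) $ i)"
  by (rule eq_matI)
    (simp_all add: conv_mat_def scalar_prod_def fps_mult_nth_as_lower_sum)

lemma S_mat_eq_conv_mat: "S_mat m f = conv_mat m (\<lambda>_. f)"
  by (simp add: S_mat_def conv_mat_def)

lemma S_mat_mult_coeffs_mat: "S_mat m f * coeffs_mat m c G = coeffs_mat m c (\<lambda>j. f * G j)"
  unfolding S_mat_eq_conv_mat conv_mat_mult_coeffs_mat by (simp add: coeffs_mat_def)

lemma P_mat_eq_conv_mat: "P_mat s r lam m = conv_mat m (\<lambda>i. phi_pow s r (lam i))"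
  unfolding P_mat_def conv_mat_def beta_def ..

lemma Q_mat_eq_coeffs_mat:
  "Q_mat s r mu m = coeffs_mat m m (\<lambda>j. fps_X ^ j * phi_pow s r (mu j))"
  by (rule eq_matI) (auto simp: Q_mat_def beta_def fps_X_power_mult_nth)

lemma diag_m_mult:
  assumes "A \<in> carrier_mat m c"
  shows "diag_m m d * A = mat m c (\<lambda>(i, j). d i * A $$ (i, j))"
  using assms by (intro eq_matI) (auto simp: diag_m_def scalar_prod_def mult_delta_left mult_delta_right)

lemma mult_diag_m:
  assumes "A \<in> carrier_mat m c"
  shows "A * diag_m c d = mat m c (\<lambda>(i, j). A $$ (i, j) * d j)"
  using assms by (intro eq_matI) (auto simp: diag_m_def scalar_prod_def mult_delta_left mult_delta_right)

lemma diag_m_mult_coeffs_mat: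
  "diag_m m (\<lambda>i. of_nat (m - 1 - i)) * coeffs_mat m c G
     = coeffs_mat m c (\<lambda>j. fps_const (of_nat (m - 1)) * G j - fps_X * fps_deriv (G j))"
  unfolding diag_m_mult[OF coeffs_mat_carrier]
  by (rule eq_matI) (auto simp: fps_X_mult_deriv_nth algebra_simps)

lemma diag_m_mult_diag_m: "diag_m m d * diag_m m z = diag_m m (\<lambda>i. d i * z i)"
proof -
  have D: "diag_m m d \<in> carrier_mat m m"
    by (simp add: diag_m_def)
  show ?thesis
    unfolding mult_diag_m[OF D] by (rule eq_matI) (auto simp: diag_m_def)
qed

lemma smult_coeffs_mat: "a \<cdot>\<^sub>m coeffs_mat m c G = coeffs_mat m c (\<lambda>j. fps_const a * G j)"
  by (rule eq_matI) auto

lemma minus_coeffs_mat: "coeffs_mat m c G - coeffs_mat m c H = coeffs_mat m c (\<lambda>j. G j - H j)"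
  by (rule eq_matI) auto

lemma R1_mult_coeffs_mat:
  "(n \<cdot>\<^sub>m S_mat m \<psi> - S_mat m f * diag_m m (\<lambda>i. of_nat (m - 1 - i))) * coeffs_mat m c G
     = coeffs_mat m c (\<lambda>j. fps_const n * (\<psi> * G j)
         - f * (fps_const (of_nat (m - 1)) * G j - fps_X * fps_deriv (G j)))"
proof -
  have S: "S_mat m g \<in> carrier_mat m m" for g :: "'a fps"
    by (simp add: S_mat_eq_conv_mat)
  have D: "diag_m m (\<lambda>i. of_nat (m - 1 - i)) \<in> carrier_mat m m"
    by (simp add: diag_m_def)
  have "(n \<cdot>\<^sub>m S_mat m \<psi> - S_mat m f * diag_m m (\<lambda>i. of_nat (m - 1 - i))) * coeffs_mat m c G
      = (n \<cdot>\<^sub>m S_mat m \<psi>) * coeffs_mat m c G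
        - (S_mat m f * diag_m m (\<lambda>i. of_nat (m - 1 - i))) * coeffs_mat m c G"
    using S mult_carrier_mat[OF S D] by (intro minus_mult_distrib_mat[of _ m m]) auto
  also have "(n \<cdot>\<^sub>m S_mat m \<psi>) * coeffs_mat m c G = n \<cdot>\<^sub>m (S_mat m \<psi> * coeffs_mat m c G)"
    by (rule mult_smult_assoc_mat[OF S coeffs_mat_carrier])
  also have "(S_mat m f * diag_m m (\<lambda>i. of_nat (m - 1 - i))) * coeffs_mat m c G
      = S_mat m f * (diag_m m (\<lambda>i. of_nat (m - 1 - i)) * coeffs_mat m c G)"
    by (rule assoc_mult_mat[OF S D coeffs_mat_carrier])
  finally show ?thesis
    unfolding diag_m_mult_coeffs_mat S_mat_mult_coeffs_mat smult_coeffs_mat minus_coeffs_mat .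
qed

lemma inverts_mat_of_diagonalizing:
  fixes R Q P :: "'a::field mat"
  assumes carrier: "R \<in> carrier_mat m m" "Q \<in> carrier_mat m m" "P \<in> carrier_mat m m"
    and diagonal: "P * (R * Q) = diag_m m d"
    and scaling: "\<And>i. i < m \<Longrightarrow> d i * z i = n" and "n \<noteq> 0"
  defines "M \<equiv> (1 / n) \<cdot>\<^sub>m (Q * diag_m m z * P)"
  shows "inverts_mat R M \<and> inverts_mat M R"
proof -
  define N where "N = (1 / n) \<cdot>\<^sub>m (R * Q * diag_m m z)"
  have Z: "diag_m m z \<in> carrier_mat m m"
    by (simp add: diag_m_def)
  have N: "N \<in> carrier_mat m m" and M: "M \<in> carrier_mat m m"
    using carrier Z by (simp_all add: N_def M_def)
  have "P * N = (1 / n) \<cdot>\<^sub>m (P * (R * Q * diag_m m z))"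
    unfolding N_def using carrier Z by (simp add: mult_smult_distrib[of _ m m _ m])
  also have "P * (R * Q * diag_m m z) = P * (R * Q) * diag_m m z"
    by (rule assoc_mult_mat[symmetric, OF carrier(3) mult_carrier_mat[OF carrier(1,2)] Z])
  also have "P * (R * Q) * diag_m m z = n \<cdot>\<^sub>m 1\<^sub>m m"
    unfolding diagonal diag_m_mult_diag_m by (rule eq_matI) (auto simp: diag_m_def scaling)
  also have "(1 / n) \<cdot>\<^sub>m (n \<cdot>\<^sub>m 1\<^sub>m m) = 1\<^sub>m m"
    using \<open>n \<noteq> 0\<close> by (intro eq_matI) auto
  finally have "P * N = 1\<^sub>m m" .
  then have "N * P = 1\<^sub>m m"
    by (rule mat_mult_left_right_inverse[OF carrier(3) N])
  moreover have "R * M = N * P"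
    using carrier Z
    by (simp add: M_def N_def mult_smult_distrib[of _ m m _ m] mult_smult_assoc_mat[of _ m m _ m]
        assoc_mult_mat[of _ m m _ m _ m])
  ultimately have "R * M = 1\<^sub>m m"
    by simp
  then show ?thesis
    using carrier M mat_mult_left_right_inverse by (auto simp: inverts_mat_def)
qed

theorem lemma13:
  fixes s :: "nat \<Rightarrow> 'a::field_char_0" and n :: 'a and r :: nat
  assumes "r \<ge> 2"
    and "n \<noteq> 0"
    and "\<And>k. k < r \<Longrightarrow> of_nat r * n - of_nat k \<noteq> 0"
  defines "R1 \<equiv> n \<cdot>\<^sub>m S_mat r (fps_const (of_nat r) * phi s r - fps_X * fps_deriv (phi s r))
                 - S_mat r (phi s r) * diag_m r (\<lambda>i. of_nat (r - 1 - i))"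
    and "M \<equiv> (1 / n) \<cdot>\<^sub>m
            (Q_mat s r (\<lambda>j. of_nat (r - 1 - j) / of_nat r) r
             * diag_m r (\<lambda>i. n / (of_nat r * n - of_nat (r - 1 - i)))
             * P_mat s r (\<lambda>i. - (of_nat (2 * r - 1 - i) / of_nat r)) r)"
  shows "inverts_mat R1 M \<and> inverts_mat M R1"
proof -
  let ?Q = "Q_mat s r (\<lambda>j. of_nat (r - 1 - j) / of_nat r) r"
  let ?P = "P_mat s r (\<lambda>i. - (of_nat (2 * r - 1 - i) / of_nat r)) r"
  have diagonal: "?P * (R1 * ?Q) = diag_m r (\<lambda>j. of_nat r * n - of_nat (r - 1 - j))"
    unfolding R1_def Q_mat_eq_coeffs_mat R1_mult_coeffs_mat P_mat_eq_conv_mat conv_mat_mult_coeffs_mat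
    by (rule eq_matI) (use phi_pow_mult_R1_column_nth[of _ r _ s n] in \<open>simp_all add: diag_m_def\<close>)
  have scaling: "(of_nat r * n - of_nat (r - 1 - i)) * (n / (of_nat r * n - of_nat (r - 1 - i))) = n"
    if "i < r" for i
    using assms(3)[of "r - 1 - i"] that by simp
  have "R1 \<in> carrier_mat r r"
    unfolding R1_def
    by (intro minus_carrier_mat mult_carrier_mat[of _ r r]) (simp_all add: S_mat_eq_conv_mat diag_m_def)
  then show ?thesis
    unfolding M_def
    by (rule inverts_mat_of_diagonalizing[OF _ _ _ diagonal scaling \<open>n \<noteq> 0\<close>])
      (simp_all add: Q_mat_eq_coeffs_mat P_mat_eq_conv_mat)
qed

end
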